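(* Let $G$ be a cactus graph with $n>2$ vertices and $b$ bridges, and let $d=\deg(G)$ be its degree sequence. Then $b\ge \beta$, where $\beta=\max\{\mu_1,\tfrac12(\mu_1+\mu_{odd})\}$.
   Context: A cactus graph is a connected simple graph in which every edge belongs to at most one cycle. A bridge is an edge whose removal disconnects the graph. For a degree sequence $d$, $\mu_1$ denotes the number of entries equal to $1$, and $\mu_{odd}$ denotes the number of entries that are odd integers greater than $1$. *)

theory Defs
  imports Complex_Main
begin

definition simple_graph :: "'a set \<Rightarrow> 'a set set \<Rightarrow> bool" where
  "simple_graph V E \<longleftrightarrow> finite V \<and> (\<forall>e\<in>E. e \<subseteq> V \<and> card e = 2)"

fun is_walk :: "'a set set \<Rightarrow> 'a list \<Rightarrow> bool" where
  "is_walk E [] = False"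
| "is_walk E [v] = True"
| "is_walk E (u # v # vs) = ({u, v} \<in> E \<and> is_walk E (v # vs))"

definition connected_graph :: "'a set \<Rightarrow> 'a set set \<Rightarrow> bool" where
  "connected_graph V E \<longleftrightarrow>
     (\<forall>u\<in>V. \<forall>v\<in>V. \<exists>p. is_walk E p \<and> hd p = u \<and> last p = v)"

definition cycle_edges :: "'a list \<Rightarrow> 'a set set" where
  "cycle_edges vs = {{vs ! i, vs ! ((i + 1) mod length vs)} | i. i < length vs}"

text \<open>A cycle (as a subgraph, identified with its edge set): at least 3 distinct
vertices, cyclically consecutive ones adjacent.\<close>
definition cycles :: "'a set set \<Rightarrow> 'a set set set" where
  "cycles E = {cycle_edges vs | vs. length vs \<ge> 3 \<and> distinct vs \<and> cycle_edges vs \<subseteq> E}"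

definition cactus :: "'a set \<Rightarrow> 'a set set \<Rightarrow> bool" where
  "cactus V E \<longleftrightarrow> simple_graph V E \<and> connected_graph V E \<and>
     (\<forall>e\<in>E. card {C \<in> cycles E. e \<in> C} \<le> 1)"

definition bridges :: "'a set \<Rightarrow> 'a set set \<Rightarrow> 'a set set" where
  "bridges V E = {e \<in> E. \<not> connected_graph V (E - {e})}"

definition degree :: "'a set set \<Rightarrow> 'a \<Rightarrow> nat" where
  "degree E v = card {e \<in> E. v \<in> e}"

definition mu1 :: "'a set \<Rightarrow> 'a set set \<Rightarrow> nat" where
  "mu1 V E = card {v \<in> V. degree E v = 1}"

definition mu_odd :: "'a set \<Rightarrow> 'a set set \<Rightarrow> nat" where
  "mu_odd V E = card {v \<in> V. odd (degree E v) \<and> degree E v > 1}"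

end

theory Submission imports Defs begin

(* An edge that is not a bridge closes a cycle, and in a cactus distinct cycles through a
vertex v share no edge and each contributes exactly two edges at v; so every vertex of odd degree,
in particular every leaf, lies on a bridge. Counting vertex-bridge incidences then gives
\<mu>\<^sub>1 + \<mu>\<^sub>o\<^sub>d\<^sub>d \<le> 2b, as a bridge has two ends, and \<mu>\<^sub>1 \<le> b, as in a connected
graph with more than two vertices no edge joins two leaves. *)

lemma is_walk_nonempty: "is_walk E p \<Longrightarrow> p \<noteq> []"
  by (cases p) auto

lemma is_walk_last_in_closed:
  "is_walk E p \<Longrightarrow> hd p \<in> S \<Longrightarrow> (\<forall>s\<in>S. \<forall>f\<in>E. s \<in> f \<longrightarrow> f \<subseteq> S) \<Longrightarrow> last p \<in> S"
proof (induction E p rule: is_walk.induct)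
  case (3 E u v vs)
  then have "{u, v} \<in> E" "u \<in> S" by simp_all
  with "3.prems"(3) have "{u, v} \<subseteq> S" by blast
  with 3 show ?case by simp
qed auto

lemma is_walk_nth: "is_walk E q \<Longrightarrow> Suc i < length q \<Longrightarrow> {q ! i, q ! Suc i} \<in> E"
proof (induction E q arbitrary: i rule: is_walk.induct)
  case (3 E u v vs)
  then show ?case by (cases i) auto
qed auto

lemma is_walk_drop: "is_walk E q \<Longrightarrow> n < length q \<Longrightarrow> is_walk E (drop n q)"
proof (induction E q arbitrary: n rule: is_walk.induct)
  case (3 E u v vs)
  then show ?case by (cases n) auto
qed auto

lemma is_walk_imp_path:
  "is_walk E p \<Longrightarrow> \<exists>q. is_walk E q \<and> distinct q \<and> hd q = hd p \<and> last q = last p"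
proof (induction E p rule: is_walk.induct)
  case (2 E v)
  then show ?case by (intro exI[of _ "[v]"]) auto
next
  case (3 E u v vs)
  then obtain q where q: "is_walk E q" "distinct q" "hd q = v" "last q = last (v # vs)"
    by auto
  have "q \<noteq> []" using q(1) is_walk_nonempty by blast
  show ?case
  proof (cases "u \<in> set q")
    case True
    define k where "k = length (takeWhile (\<lambda>y. y \<noteq> u) q)"
    have drop_k: "dropWhile (\<lambda>y. y \<noteq> u) q = drop k q"
      unfolding k_def by (rule dropWhile_eq_drop)
    have "dropWhile (\<lambda>y. y \<noteq> u) q \<noteq> []"
      using True by (simp add: dropWhile_eq_Nil_conv)
    then have "hd (drop k q) = u" "k < length q"
      using hd_dropWhile[of "\<lambda>y. y \<noteq> u" q] drop_k by simp_all
    then have "is_walk E (drop k q)" "last (drop k q) = last q"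
      using is_walk_drop[OF q(1)] by (simp_all add: last_drop)
    with \<open>hd (drop k q) = u\<close> show ?thesis
      using q \<open>q \<noteq> []\<close> by (intro exI[of _ "drop k q"]) auto
  next
    case False
    obtain r where "q = v # r" using \<open>q \<noteq> []\<close> q(3) by (cases q) auto
    then have "is_walk E (u # q)" using "3.prems" q(1) by simp
    then show ?thesis using False q \<open>q \<noteq> []\<close> by (intro exI[of _ "u # q"]) auto
  qed
qed auto

lemma path_closes_cycle:
  assumes "u \<noteq> w" "{u, w} \<in> E" "is_walk (E - {{u, w}}) q" "distinct q"
    and "hd q = u" "last q = w"
  shows "cycle_edges q \<in> cycles E" "{u, w} \<in> cycle_edges q"
proof -
  define n where "n = length q"
  have "q \<noteq> []" using assms(3) is_walk_nonempty by blast
  have first: "q ! 0 = u" using assms(5) \<open>q \<noteq> []\<close> by (simp add: hd_conv_nth)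
  have final: "q ! (n - 1) = w" using assms(6) \<open>q \<noteq> []\<close> unfolding n_def by (simp add: last_conv_nth)
  have "n \<noteq> 1" using first final assms(1) by auto
  moreover have "n \<noteq> 2"
  proof
    assume "n = 2"
    then have "{q ! 0, q ! Suc 0} \<in> E - {{u, w}}" using is_walk_nth[OF assms(3)] n_def by simp
    then show False using first final \<open>n = 2\<close> by simp
  qed
  moreover have "n \<noteq> 0" using \<open>q \<noteq> []\<close> n_def by simp
  ultimately have "n \<ge> 3" by linarith
  have closing: "{q ! (n - 1), q ! ((n - 1 + 1) mod n)} = {u, w}"
    using first final \<open>n \<ge> 3\<close> by auto
  have edge_i: "{q ! i, q ! ((i + 1) mod n)} \<in> cycle_edges q" if "i < n" for i
    using that unfolding cycle_edges_def n_def by blast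
  have "cycle_edges q \<subseteq> E"
  proof
    fix e assume "e \<in> cycle_edges q"
    then obtain i where i: "i < n" "e = {q ! i, q ! ((i + 1) mod n)}"
      unfolding cycle_edges_def n_def by blast
    show "e \<in> E"
    proof (cases "Suc i < n")
      case True
      then show ?thesis using i is_walk_nth[OF assms(3)] n_def by auto
    next
      case False
      then have "i = n - 1" using i by simp
      then show ?thesis using i closing assms(2) by simp
    qed
  qed
  then show "cycle_edges q \<in> cycles E"
    unfolding cycles_def using \<open>n \<ge> 3\<close> assms(4) n_def by auto
  show "{u, w} \<in> cycle_edges q"
    using edge_i[of "n - 1"] closing \<open>n \<ge> 3\<close> by simp
qed

lemma simple_graph_finite_edges: "simple_graph V E \<Longrightarrow> finite E"
  unfolding simple_graph_def by (meson PowI finite_Pow_iff finite_subset subsetI)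

lemma non_bridge_on_cycle:
  assumes "simple_graph V E" "e \<in> E" "e \<notin> bridges V E"
  shows "\<exists>C\<in>cycles E. e \<in> C"
proof -
  have "e \<subseteq> V" "card e = 2" using assms(1,2) unfolding simple_graph_def by auto
  then obtain v w where vw: "e = {v, w}" "v \<noteq> w" "v \<in> V" "w \<in> V" by (auto simp: card_2_iff)
  have "connected_graph V (E - {e})" using assms(2,3) unfolding bridges_def by simp
  then obtain p where "is_walk (E - {e}) p" "hd p = v" "last p = w"
    using vw unfolding connected_graph_def by blast
  then obtain q where "is_walk (E - {e}) q" "distinct q" "hd q = v" "last q = w"
    using is_walk_imp_path by metis
  then show ?thesis using path_closes_cycle[of v w E q] vw assms(2) by blast
qed

lemma cycle_edges_degree:
  assumes "distinct vs" "length vs \<ge> 3" "v \<in> set vs"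
  shows "card {e \<in> cycle_edges vs. v \<in> e} = 2"
proof -
  define n where "n = length vs"
  obtain k where k: "k < n" "v = vs ! k" using assms(3) unfolding n_def by (metis in_set_conv_nth)
  define a where "a = (k + 1) mod n"
  define b where "b = (k + n - 1) mod n"
  have "n \<ge> 3" using assms(2) n_def by simp
  have "a < n" "b < n" using \<open>n \<ge> 3\<close> unfolding a_def b_def by auto
  have "k \<noteq> a" "k \<noteq> b" "a \<noteq> b" using k(1) \<open>n \<ge> 3\<close> unfolding a_def b_def
    by (cases "Suc k < n"; cases k; auto simp: mod_if)+
  have b_succ: "(b + 1) mod n = k" unfolding b_def using k(1) \<open>n \<ge> 3\<close>
    by (metis Nat.add_diff_assoc2 add.commute add_diff_cancel_right' mod_add_self2 mod_less
        mod_Suc_eq Suc_eq_plus1 le_add2 le_trans one_le_numeral)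
  have nth_inj: "\<And>i j. i < n \<Longrightarrow> j < n \<Longrightarrow> vs ! i = vs ! j \<Longrightarrow> i = j"
    using assms(1) unfolding n_def by (simp add: nth_eq_iff_index_eq)
  have "{e \<in> cycle_edges vs. v \<in> e} = {{vs ! k, vs ! a}, {vs ! b, vs ! k}}"
  proof
    show "{e \<in> cycle_edges vs. v \<in> e} \<subseteq> {{vs ! k, vs ! a}, {vs ! b, vs ! k}}"
    proof
      fix e assume "e \<in> {e \<in> cycle_edges vs. v \<in> e}"
      then obtain i where i: "i < n" "e = {vs ! i, vs ! ((i + 1) mod n)}" "v \<in> e"
        unfolding cycle_edges_def n_def by auto
      show "e \<in> {{vs ! k, vs ! a}, {vs ! b, vs ! k}}"
      proof (cases "vs ! i = v")
        case True
        then have "i = k" using nth_inj i(1) k by simp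
        then show ?thesis using i a_def by simp
      next
        case False
        then have "(i + 1) mod n = k" using nth_inj i k \<open>n \<ge> 3\<close> by auto
        then have "i = b" unfolding b_def using i(1) k(1)
          by (cases "Suc i < n") (auto simp: mod_if)
        then show ?thesis using i b_succ by auto
      qed
    qed
    have "{vs ! k, vs ! a} \<in> cycle_edges vs" "{vs ! b, vs ! k} \<in> cycle_edges vs"
      unfolding cycle_edges_def a_def n_def[symmetric] using k(1) \<open>b < n\<close> b_succ by auto
    then show "{{vs ! k, vs ! a}, {vs ! b, vs ! k}} \<subseteq> {e \<in> cycle_edges vs. v \<in> e}"
      using k by auto
  qed
  moreover have "vs ! a \<noteq> vs ! b" "vs ! k \<noteq> vs ! a"
    using nth_inj \<open>a < n\<close> \<open>b < n\<close> \<open>k \<noteq> a\<close> \<open>a \<noteq> b\<close> k(1) by blast+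
  then have "{vs ! k, vs ! a} \<noteq> {vs ! b, vs ! k}" by (metis insert_iff doubleton_eq_iff)
  ultimately show ?thesis by simp
qed

lemma cycle_degree:
  assumes "C \<in> cycles E" "e \<in> C" "v \<in> e"
  shows "card {e \<in> C. v \<in> e} = 2"
proof -
  obtain vs where vs: "C = cycle_edges vs" "length vs \<ge> 3" "distinct vs"
    using assms(1) unfolding cycles_def by auto
  moreover have "length vs > 0" using vs(2) by linarith
  ultimately have "v \<in> set vs" using assms(2,3) unfolding cycle_edges_def by (auto intro!: nth_mem)
  then show ?thesis using cycle_edges_degree vs by simp
qed

lemma degree_eq_twice_cycles:
  assumes "finite E" and unique: "\<forall>e\<in>E. card {C \<in> cycles E. e \<in> C} \<le> 1"
    and on_cycle: "\<forall>e\<in>E. v \<in> e \<longrightarrow> (\<exists>C\<in>cycles E. e \<in> C)"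
  shows "degree E v = 2 * card {C \<in> cycles E. \<exists>e\<in>C. v \<in> e}"
proof -
  define Cs where "Cs = {C \<in> cycles E. \<exists>e\<in>C. v \<in> e}"
  have sub: "C \<subseteq> E" if "C \<in> cycles E" for C using that unfolding cycles_def by auto
  then have "cycles E \<subseteq> Pow E" by blast
  then have "finite (cycles E)" using \<open>finite E\<close> by (meson finite_Pow_iff finite_subset)
  then have "finite Cs" unfolding Cs_def by simp
  have same_cycle: "C1 = C2" if "C1 \<in> cycles E" "C2 \<in> cycles E" "e \<in> C1" "e \<in> C2" for e C1 C2
  proof -
    have "card {C \<in> cycles E. e \<in> C} \<le> Suc 0" using unique that(1,3) sub by auto
    moreover have "finite {C \<in> cycles E. e \<in> C}" using \<open>finite (cycles E)\<close> by simp
    ultimately show ?thesis using that by (auto simp: card_le_Suc0_iff_eq)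
  qed
  have "{e \<in> E. v \<in> e} = (\<Union>C\<in>Cs. {e \<in> C. v \<in> e})"
  proof (intro equalityI subsetI)
    fix e assume e: "e \<in> {e \<in> E. v \<in> e}"
    then obtain C where "C \<in> cycles E" "e \<in> C" using on_cycle by auto
    with e show "e \<in> (\<Union>C\<in>Cs. {e \<in> C. v \<in> e})" unfolding Cs_def by auto
  qed (use sub in \<open>auto simp: Cs_def\<close>)
  also have "card \<dots> = (\<Sum>C\<in>Cs. card {e \<in> C. v \<in> e})"
  proof (rule card_UN_disjoint[OF \<open>finite Cs\<close>])
    show "\<forall>C\<in>Cs. finite {e \<in> C. v \<in> e}"
      using sub \<open>finite E\<close> unfolding Cs_def by (auto intro: finite_subset)
    show "\<forall>C1\<in>Cs. \<forall>C2\<in>Cs. C1 \<noteq> C2 \<longrightarrow> {e \<in> C1. v \<in> e} \<inter> {e \<in> C2. v \<in> e} = {}"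
      using same_cycle unfolding Cs_def by blast
  qed
  also have "\<dots> = (\<Sum>C\<in>Cs. 2)"
    by (rule sum.cong) (auto simp: Cs_def intro: cycle_degree)
  finally show ?thesis unfolding degree_def Cs_def by simp
qed

lemma cactus_odd_degree_imp_bridge:
  assumes "cactus V E" "odd (degree E v)"
  shows "\<exists>e\<in>bridges V E. v \<in> e"
proof (rule ccontr)
  assume no_bridge: "\<not> (\<exists>e\<in>bridges V E. v \<in> e)"
  have "simple_graph V E" and unique: "\<forall>e\<in>E. card {C \<in> cycles E. e \<in> C} \<le> 1"
    using assms(1) unfolding cactus_def by simp_all
  then have "finite E" by (simp add: simple_graph_finite_edges)
  moreover have "\<forall>e\<in>E. v \<in> e \<longrightarrow> (\<exists>C\<in>cycles E. e \<in> C)"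
    using non_bridge_on_cycle[OF \<open>simple_graph V E\<close>] no_bridge by blast
  ultimately have "degree E v = 2 * card {C \<in> cycles E. \<exists>e\<in>C. v \<in> e}"
    using unique by (simp add: degree_eq_twice_cycles)
  then show False using assms(2) by simp
qed

lemma edge_has_at_most_one_leaf:
  assumes "simple_graph V E" "connected_graph V E" "card V > 2" "e \<in> E"
  shows "card ({v \<in> V. degree E v = 1} \<inter> e) \<le> 1"
proof (rule ccontr)
  assume "\<not> ?thesis"
  moreover have "finite e" "card e = 2" using assms(1,4) unfolding simple_graph_def
    by (auto intro: card_ge_0_finite)
  ultimately obtain u v where uv: "u \<noteq> v" "u \<in> e" "v \<in> e" "degree E u = 1" "degree E v = 1"
    by (auto simp: card_le_Suc0_iff_eq)
  then have "e = {u, v}" using card_subset_eq[of e "{u, v}"] \<open>card e = 2\<close> \<open>finite e\<close> by auto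
  have "finite V" using assms(1) unfolding simple_graph_def by simp
  have "\<not> V \<subseteq> {u, v}"
  proof
    assume "V \<subseteq> {u, v}"
    then have "card V \<le> card {u, v}" by (simp add: card_mono)
    then show False using assms(3) uv(1) by simp
  qed
  then obtain x where x: "x \<in> V" "x \<notin> {u, v}" by blast
  have "u \<in> V" using assms(1,4) uv(2) unfolding simple_graph_def by auto
  then obtain p where p: "is_walk E p" "hd p = u" "last p = x"
    using assms(2) x(1) unfolding connected_graph_def by blast
  have only_edge: "f = e" if "f \<in> E" "w \<in> f" "w \<in> {u, v}" for f w
  proof -
    have "card {f \<in> E. w \<in> f} = 1" using that(3) uv unfolding degree_def by auto
    then obtain g where g: "{f \<in> E. w \<in> f} = {g}" by (rule card_1_singletonE)
    have "e \<in> {g}" "f \<in> {g}"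
      unfolding g[symmetric] using that assms(4) \<open>e = {u, v}\<close> by auto
    then show "f = e" by simp
  qed
  then have "\<forall>s\<in>{u, v}. \<forall>f\<in>E. s \<in> f \<longrightarrow> f \<subseteq> {u, v}"
    using \<open>e = {u, v}\<close> by blast
  then have "last p \<in> {u, v}" by (intro is_walk_last_in_closed[OF p(1)]) (simp_all add: p(2))
  then show False using p(3) x(2) by simp
qed

lemma card_le_mult_card_covering:
  assumes "finite S" "finite B" "\<forall>v\<in>S. \<exists>e\<in>B. v \<in> e" "\<forall>e\<in>B. card (S \<inter> e) \<le> k"
  shows "card S \<le> k * card B"
proof -
  have "card S = (\<Sum>v\<in>S. 1)" by simp
  also have "\<dots> \<le> (\<Sum>v\<in>S. card {e \<in> B. v \<in> e})"
    using assms(2,3) by (intro sum_mono) (auto simp: Suc_le_eq card_gt_0_iff)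
  also have "\<dots> = (\<Sum>v\<in>S. \<Sum>e\<in>B. if v \<in> e then 1 else 0)"
    using assms(2) by (simp add: sum.inter_filter[symmetric])
  also have "\<dots> = (\<Sum>e\<in>B. \<Sum>v\<in>S. if v \<in> e then 1 else 0)" by (rule sum.swap)
  also have "\<dots> = (\<Sum>e\<in>B. card (S \<inter> e))"
    using assms(1) by (simp add: sum.inter_filter[symmetric] Int_def)
  also have "\<dots> \<le> (\<Sum>e\<in>B. k)" by (rule sum_mono) (use assms(4) in blast)
  finally show ?thesis by (simp add: mult.commute)
qed

lemma mu1_add_mu_odd: "finite V \<Longrightarrow> mu1 V E + mu_odd V E = card {v \<in> V. odd (degree E v)}"
  unfolding mu1_def mu_odd_def
  by (subst card_Un_disjoint[symmetric]) (auto intro!: arg_cong[where f = card] elim: oddE)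

theorem lemma4p4:
  fixes V :: "'a set" and E :: "'a set set"
  assumes "cactus V E" and "card V > 2"
  shows "real (card (bridges V E))
           \<ge> max (real (mu1 V E)) ((real (mu1 V E) + real (mu_odd V E)) / 2)"
proof -
  have graph: "simple_graph V E" "connected_graph V E" using assms(1) unfolding cactus_def by auto
  then have "finite V" "finite (bridges V E)"
    using simple_graph_finite_edges[OF graph(1)] unfolding simple_graph_def bridges_def by simp_all
  have odd_on_bridge: "\<forall>v\<in>S. \<exists>e\<in>bridges V E. v \<in> e" if "\<forall>v\<in>S. odd (degree E v)" for S
    using that cactus_odd_degree_imp_bridge[OF assms(1)] by blast
  have "\<forall>e\<in>bridges V E. card ({v \<in> V. degree E v = 1} \<inter> e) \<le> 1"
    using edge_has_at_most_one_leaf[OF graph assms(2)] by (simp add: bridges_def)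
  then have "mu1 V E \<le> 1 * card (bridges V E)"
    unfolding mu1_def using \<open>finite V\<close> \<open>finite (bridges V E)\<close>
    by (intro card_le_mult_card_covering odd_on_bridge) auto
  moreover have "\<forall>e\<in>bridges V E. card ({v \<in> V. odd (degree E v)} \<inter> e) \<le> 2"
  proof
    fix e assume "e \<in> bridges V E"
    then have "finite e" "card e = 2"
      using graph(1) unfolding simple_graph_def bridges_def by (auto intro: card_ge_0_finite)
    then show "card ({v \<in> V. odd (degree E v)} \<inter> e) \<le> 2" using card_mono by fastforce
  qed
  then have "mu1 V E + mu_odd V E \<le> 2 * card (bridges V E)"
    unfolding mu1_add_mu_odd[OF \<open>finite V\<close>] using \<open>finite V\<close> \<open>finite (bridges V E)\<close>
    by (intro card_le_mult_card_covering odd_on_bridge) auto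
  ultimately show ?thesis by simp
qed

end
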